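(* Let $V$ and $W$ be separable real Hilbert spaces with inner products $a(\cdot,\cdot)$ and $b(\cdot,\cdot)$ and induced norms $\|\cdot\|_a$, $\|\cdot\|_b$, and let $\gamma:V\to W$ be a compact linear operator. Let $V_h$ be a finite-dimensional space with $\dim V_h=d$, such that $V$ and $V_h$ are subspaces of a common real vector space, and set $V(h):=V+V_h$. Let $\widehat a(\cdot,\cdot)$ be a symmetric positive semidefinite bilinear form on $V(h)$ whose restriction to $V_h$ is an inner product and which satisfies $\widehat a(u,v)=a(u,v)$ for all $u,v\in V$; write $\|v\|_a:=\widehat a(v,v)^{1/2}$ for $v\in V(h)$ (a seminorm). Let $\widehat\gamma:V(h)\to W$ be a (compact) linear operator with $\widehat\gamma u=\gamma u$ for $u\in V$. Define $P_h:V(h)\to V_h$ by $\widehat a(u-P_hu,v_h)=0$ for all $v_h\in V_h$. Define, for $k\ge 1$ (with $k\le \dim V$), $$\mu_k:=\sup_{H_k\subset V,\ \dim H_k=k}\ \inf_{v\in H_k\setminus\{0\}}\frac{b(\gamma v,\gamma v)}{a(v,v)},$$ and for $1\le k\le d$, $$\mu_{k,h}:=\max_{H_{k,h}\subset V_h,\ \dim H_{k,h}=k}\ \min_{v_h\in H_{k,h}\setminus\{0\}}\frac{b(\widehat\gamma v_h,\widehat\gamma v_h)}{\widehat a(v_h,v_h)},$$ so that $\mu_{1,h}\ge\cdots\ge\mu_{d',h}>\mu_{d'+1,h}=\cdots=\mu_{d,h}=0$ for some $d'\le d$. Suppose there is a number $C_h\ge 0$ such that $$\|\widehat\gamma(I-P_h)v\|_b\le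 C_h\,\|(I-P_h)v\|_a\qquad\forall v\in V(h).$$ Then $\mu_k\le \mu_{k,h}+C_h^2$ for $k=1,\dots,d$ (with $k\le\dim V$). Consequently, writing $\lambda_k:=1/\mu_k$ (with $\lambda_k:=+\infty$ if $\mu_k=0$) and $\lambda_{k,h}:=1/\mu_{k,h}$ for $1\le k\le d'$, $$\lambda_k\ \ge\ \frac{\lambda_{k,h}}{1+C_h^2\lambda_{k,h}},\qquad k=1,\dots,d'.$$ No positive definiteness of $\widehat a$ on $V(h)$ is assumed.
   Context: The numbers $\mu_k$ are the eigenvalues (in nonincreasing order, with multiplicity, possibly including $0$) of the compact self-adjoint positive semidefinite operator $G\gamma:V\to V$, where $G:W\to V$ is defined by $a(Gf,v)=b(f,\gamma v)$ for all $v\in V$; equivalently they are the eigenvalues $\mu$ of $b(\gamma u,\gamma v)=\mu\,a(u,v)$ for all $v\in V$, and $\lambda_k=1/\mu_k$ are the eigenvalues of $a(u,v)=\lambda\, b(\gamma u,\gamma v)$. The $\mu_{k,h}$ are the eigenvalues of the discrete problem $b(\widehat\gamma u_h,\widehat\gamma v_h)=\mu_h\widehat a(u_h,v_h)$ for all $v_h\in V_h$. *)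

theory Defs
  imports "HOL-Analysis.Analysis"
begin

definition dim_subspaces :: "'a::real_vector set \<Rightarrow> nat \<Rightarrow> 'a set set" where
  "dim_subspaces S k = {H. H \<subseteq> S \<and> real_vector.subspace H \<and>
      (\<exists>B. finite B \<and> real_vector.independent B \<and> real_vector.span B = H \<and> card B = k)}"

definition compact_operator :: "('a::real_normed_vector \<Rightarrow> 'b::real_normed_vector) \<Rightarrow> bool" where
  "compact_operator T \<longleftrightarrow> linear T \<and> (\<forall>S. bounded S \<longrightarrow> compact (closure (T ` S)))"

definition separable_space :: "'a::metric_space itself \<Rightarrow> bool" where
  "separable_space _ \<longleftrightarrow> (\<exists>D::'a set. countable D \<and> closure D = UNIV)"

definition linear_on_set :: "'a::real_vector set \<Rightarrow> ('a \<Rightarrow> 'b::real_vector) \<Rightarrow> bool" where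
  "linear_on_set S f \<longleftrightarrow> (\<forall>x\<in>S. \<forall>y\<in>S. f (x + y) = f x + f y) \<and> (\<forall>c. \<forall>x\<in>S. f (c *\<^sub>R x) = c *\<^sub>R f x)"

definition bilinear_on_set :: "'a::real_vector set \<Rightarrow> ('a \<Rightarrow> 'a \<Rightarrow> real) \<Rightarrow> bool" where
  "bilinear_on_set S B \<longleftrightarrow> (\<forall>x\<in>S. linear_on_set S (B x)) \<and> (\<forall>y\<in>S. linear_on_set S (\<lambda>x. B x y))"

definition mu_V :: "('v::real_inner \<Rightarrow> 'w::real_inner) \<Rightarrow> nat \<Rightarrow> real" where
  "mu_V \<gamma> k = (SUP H\<in>dim_subspaces (UNIV::'v set) k. INF v\<in>H - {0}. (\<gamma> v \<bullet> \<gamma> v) / (v \<bullet> v))"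

definition mu_h :: "'e::real_vector set \<Rightarrow> ('e \<Rightarrow> 'e \<Rightarrow> real) \<Rightarrow> ('e \<Rightarrow> 'w::real_inner) \<Rightarrow> nat \<Rightarrow> real" where
  "mu_h Vh ahat gh k = (SUP H\<in>dim_subspaces Vh k. INF v\<in>H - {0}. (gh v \<bullet> gh v) / ahat v v)"

definition lam :: "real \<Rightarrow> ereal" where
  "lam \<mu> = (if \<mu> = 0 then \<infinity> else ereal (1 / \<mu>))"

end

theory Submission
  imports Defs
begin

text \<open>
  Let \<open>R\<close> be the discrete Rayleigh quotient \<open>|\<gamma>\<^sub>h w|\<^sup>2 / a\<^sub>h(w, w)\<close> on \<open>V\<^sub>h\<close>.
  For \<open>v \<in> V\<close> split \<open>v = P\<^sub>h v + r\<close>; the two parts are \<open>a\<^sub>h\<close>-orthogonal, so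
  \<open>|v|\<^sup>2 = a\<^sub>h(P\<^sub>h v, P\<^sub>h v) + a\<^sub>h(r, r)\<close>, and the triangle inequality followed by
  Cauchy--Schwarz in the plane gives \<open>|\<gamma> v|\<^sup>2 \<le> (R(P\<^sub>h v) + C\<^sub>h\<^sup>2) |v|\<^sup>2\<close>.
  As \<open>P\<^sub>h\<close> is linear on \<open>V\<close>, a \<open>k\<close>-dimensional \<open>H \<subseteq> V\<close> on which it is injective is
  mapped onto a \<open>k\<close>-dimensional subspace of \<open>V\<^sub>h\<close>, whence
  \<open>inf\<^sub>H \<le> \<mu>\<^bsub>k,h\<^esub> + C\<^sub>h\<^sup>2\<close>; otherwise some \<open>v \<in> H\<close> has \<open>P\<^sub>h v = 0\<close> and quotient at most
  \<open>C\<^sub>h\<^sup>2\<close>. Inverting gives the bound on \<open>\<lambda>\<^sub>k\<close>. That all suprema involved are finite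
  rests on \<open>R\<close> being bounded on the finite-dimensional \<open>V\<^sub>h\<close>, which follows by
  Gram--Schmidt with respect to \<open>a\<^sub>h\<close>.
\<close>

lemma linear_on_set_add: "linear_on_set U g \<Longrightarrow> x \<in> U \<Longrightarrow> y \<in> U \<Longrightarrow> g (x + y) = g x + g y"
  unfolding linear_on_set_def by blast

lemma linear_on_set_scale: "linear_on_set U g \<Longrightarrow> x \<in> U \<Longrightarrow> g (c *\<^sub>R x) = c *\<^sub>R g x"
  unfolding linear_on_set_def by blast

lemma linear_on_set_0: "linear_on_set U g \<Longrightarrow> 0 \<in> U \<Longrightarrow> g 0 = 0"
  using linear_on_set_scale[of U g 0 0] by simp

lemma linear_on_set_diff:
  assumes "subspace U" "linear_on_set U g" "x \<in> U" "y \<in> U"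
  shows "g (x - y) = g x - g y"
  using linear_on_set_add[OF assms(2,3), of "(-1) *\<^sub>R y"] linear_on_set_scale[OF assms(2,4), of "-1"]
    subspace_scale[OF assms(1,4), of "-1"] by simp

lemma linear_on_set_subset: "linear_on_set U g \<Longrightarrow> T \<subseteq> U \<Longrightarrow> linear_on_set T g"
  unfolding linear_on_set_def by blast

lemma bilinear_on_set_subset: "bilinear_on_set U a \<Longrightarrow> T \<subseteq> U \<Longrightarrow> bilinear_on_set T a"
  unfolding bilinear_on_set_def using linear_on_set_subset by blast

lemma linear_compose_linear_on_set:
  assumes "linear f" "range f \<subseteq> U" "linear_on_set U g"
  shows "linear (g \<circ> f)"
proof (rule linearI)
  have "f x \<in> U" for x using assms(2) by blast
  then show "(g \<circ> f) (x + y) = (g \<circ> f) x + (g \<circ> f) y" "(g \<circ> f) (c *\<^sub>R x) = c *\<^sub>R (g \<circ> f) x" for x y c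
    using assms(3) by (simp_all add: linear_add[OF assms(1)] linear_scale[OF assms(1)] linear_on_set_def)
qed

lemma subspace_linear_image_plus:
  assumes "linear f" "subspace T"
  shows "subspace {f u + w | u w. w \<in> T}" "range f \<subseteq> {f u + w | u w. w \<in> T}"
    "T \<subseteq> {f u + w | u w. w \<in> T}"
proof -
  have "{f u + w | u w. w \<in> T} = {x + y | x y. x \<in> range f \<and> y \<in> T}" by blast
  then show "subspace {f u + w | u w. w \<in> T}"
    using subspace_sums[OF linear_subspace_image[OF assms(1) subspace_UNIV] assms(2)] by simp
  show "range f \<subseteq> {f u + w | u w. w \<in> T}" using subspace_0[OF assms(2)] by force
  show "T \<subseteq> {f u + w | u w. w \<in> T}" using linear_0[OF assms(1)] by force
qed

lemma span_insert_eq_line: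
  assumes "p \<in> span S"
  shows "span (insert b S) = {q + t *\<^sub>R (b - p) | q t. q \<in> span S}"
proof (intro equalityI subsetI)
  fix w assume "w \<in> span (insert b S)"
  then obtain t where "w - t *\<^sub>R b \<in> span S" unfolding span_insert by blast
  then have "w - t *\<^sub>R b + t *\<^sub>R p \<in> span S" using assms by (simp add: span_add span_scale)
  moreover have "w = (w - t *\<^sub>R b + t *\<^sub>R p) + t *\<^sub>R (b - p)" by (simp add: algebra_simps)
  ultimately show "w \<in> {q + t *\<^sub>R (b - p) | q t. q \<in> span S}" by blast
next
  fix w assume "w \<in> {q + t *\<^sub>R (b - p) | q t. q \<in> span S}"
  moreover have "p \<in> span (insert b S)" "b \<in> span (insert b S)"
    using assms span_mono[OF subset_insertI] by (auto intro: span_base)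
  ultimately show "w \<in> span (insert b S)"
    using span_mono[OF subset_insertI] by (blast intro: span_add span_scale span_diff)
qed

lemma mem_dim_subspaces:
  "H \<in> dim_subspaces S k \<longleftrightarrow>
     H \<subseteq> S \<and> subspace H \<and> (\<exists>B. finite B \<and> independent B \<and> span B = H \<and> card B = k)"
  by (simp add: dim_subspaces_def dependent_raw_def)

(* Where a v v = 0, in particular at v = 0, division by zero makes the quotient 0. *)
definition rayleigh :: "('a \<Rightarrow> 'b::real_inner) \<Rightarrow> ('a \<Rightarrow> 'a \<Rightarrow> real) \<Rightarrow> 'a \<Rightarrow> real" where
  "rayleigh g a v = (g v \<bullet> g v) / a v v"

lemma rayleigh_nonneg: "0 \<le> a v v \<Longrightarrow> 0 \<le> rayleigh g a v"
  by (simp add: rayleigh_def)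

lemma rayleigh_le:
  assumes "0 \<le> K" "(norm (g v))\<^sup>2 \<le> K * a v v"
  shows "rayleigh g a v \<le> K"
proof (cases "0 < a v v")
  case True
  then show ?thesis using assms(2) by (simp add: rayleigh_def power2_norm_eq_inner divide_le_eq)
next
  case False
  then have "rayleigh g a v \<le> 0"
    unfolding rayleigh_def by (intro divide_nonneg_nonpos) auto
  then show ?thesis using assms(1) by linarith
qed

lemma norm_add_squared_le_weighted:
  fixes y z :: "'a::real_normed_vector"
  assumes "norm y \<le> sqrt m * sqrt \<alpha>" "norm z \<le> c * sqrt \<beta>" "0 \<le> m" "0 \<le> \<alpha>" "0 \<le> \<beta>"
  shows "(norm (y + z))\<^sup>2 \<le> (m + c\<^sup>2) * (\<alpha> + \<beta>)"
proof -
  have "norm (y + z) \<le> sqrt m * sqrt \<alpha> + c * sqrt \<beta>"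
    using norm_triangle_ineq[of y z] assms(1,2) by linarith
  then have "(norm (y + z))\<^sup>2 \<le> (sqrt m * sqrt \<alpha> + c * sqrt \<beta>)\<^sup>2"
    by (simp add: power_mono)
  also have "\<dots> \<le> ((sqrt m)\<^sup>2 + c\<^sup>2) * ((sqrt \<alpha>)\<^sup>2 + (sqrt \<beta>)\<^sup>2)"
    \<comment> \<open>Cauchy--Schwarz in the plane\<close>
    using zero_le_power2[of "sqrt m * sqrt \<beta> - c * sqrt \<alpha>"]
    by (simp only: power2_eq_square algebra_simps)
  finally show ?thesis using assms(3-5) by simp
qed

locale psd_form =
  fixes U :: "'a::real_vector set" and a :: "'a \<Rightarrow> 'a \<Rightarrow> real"
  assumes subspace: "subspace U"
    and bilinear: "bilinear_on_set U a"
    and symmetric: "x \<in> U \<Longrightarrow> y \<in> U \<Longrightarrow> a x y = a y x"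
    and nonneg: "x \<in> U \<Longrightarrow> 0 \<le> a x x"
begin

lemmas subspace_closed [simp] = subspace_add[OF subspace] subspace_diff[OF subspace] subspace_scale[OF subspace]

lemma linear_left: "z \<in> U \<Longrightarrow> linear_on_set U (\<lambda>x. a x z)"
  using bilinear unfolding bilinear_on_set_def by blast

lemma add_left: "x \<in> U \<Longrightarrow> y \<in> U \<Longrightarrow> z \<in> U \<Longrightarrow> a (x + y) z = a x z + a y z"
  using linear_on_set_add[OF linear_left] by simp

lemma diff_left: "x \<in> U \<Longrightarrow> y \<in> U \<Longrightarrow> z \<in> U \<Longrightarrow> a (x - y) z = a x z - a y z"
  using linear_on_set_diff[OF subspace linear_left] by simp

lemma scale_left: "x \<in> U \<Longrightarrow> z \<in> U \<Longrightarrow> a (c *\<^sub>R x) z = c * a x z"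
  using linear_on_set_scale[OF linear_left] by simp

lemma add_right: "x \<in> U \<Longrightarrow> y \<in> U \<Longrightarrow> z \<in> U \<Longrightarrow> a z (x + y) = a z x + a z y"
  using add_left symmetric by simp

lemma scale_right: "x \<in> U \<Longrightarrow> z \<in> U \<Longrightarrow> a z (c *\<^sub>R x) = c * a z x"
  using scale_left symmetric by simp

lemma zero_left [simp]: "z \<in> U \<Longrightarrow> a 0 z = 0"
  using scale_left[of z z 0] by simp

lemma zero_right [simp]: "z \<in> U \<Longrightarrow> a z 0 = 0"
  using scale_right[of z z 0] by simp

lemma rayleigh_0 [simp]: "rayleigh g a 0 = 0"
  using zero_left[OF subspace_0[OF subspace]] by (simp add: rayleigh_def)

lemma pythagoras: "q \<in> U \<Longrightarrow> r \<in> U \<Longrightarrow> a q r = 0 \<Longrightarrow> a (q + r) (q + r) = a q q + a r r"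
  by (simp add: add_left add_right symmetric[of r q])

lemma norm_eq_sqrt_rayleigh:
  assumes "linear_on_set U g" "p \<in> U" "p \<noteq> 0 \<Longrightarrow> 0 < a p p"
  shows "norm (g p) = sqrt (rayleigh g a p) * sqrt (a p p)"
proof (cases "p = 0")
  case True
  then show ?thesis using linear_on_set_0[OF assms(1) subspace_0[OF subspace]] by simp
next
  case False
  then show ?thesis using assms(3)
    by (simp add: rayleigh_def real_sqrt_mult[symmetric] norm_eq_sqrt_inner)
qed

lemma rayleigh_orthogonal_add_le:
  assumes g: "linear_on_set U g" and q: "q \<in> U" and r: "r \<in> U"
    and orth: "a q r = 0" and pos: "q \<noteq> 0 \<Longrightarrow> 0 < a q q"
    and bound: "norm (g r) \<le> c * sqrt (a r r)"
  shows "rayleigh g a (q + r) \<le> rayleigh g a q + c\<^sup>2"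
proof (rule rayleigh_le)
  have \<rho>: "0 \<le> rayleigh g a q" using nonneg[OF q] by (rule rayleigh_nonneg)
  then show "(norm (g (q + r)))\<^sup>2 \<le> (rayleigh g a q + c\<^sup>2) * a (q + r) (q + r)"
    using norm_add_squared_le_weighted[OF norm_eq_sqrt_rayleigh[OF g q pos, THEN eq_refl] bound
        \<rho> nonneg[OF q] nonneg[OF r]] linear_on_set_add[OF g q r] pythagoras[OF q r orth] by simp
  show "0 \<le> rayleigh g a q + c\<^sup>2" using \<rho> by simp
qed

lemma orthogonal_projection_eq:
  assumes T: "subspace T" "T \<subseteq> U" "\<And>t. t \<in> T \<Longrightarrow> t \<noteq> 0 \<Longrightarrow> 0 < a t t"
    and P: "\<And>x. x \<in> U \<Longrightarrow> P x \<in> T \<and> (\<forall>t\<in>T. a (x - P x) t = 0)"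
    and x: "x \<in> U" and y: "y \<in> T" "\<forall>t\<in>T. a (x - y) t = 0"
  shows "P x = y"
proof -
  have z: "P x - y \<in> T" using P x y subspace_diff[OF T(1)] by blast
  have "a (P x - y) (P x - y) = a (x - y) (P x - y) - a (x - P x) (P x - y)"
    using diff_left[of "x - y" "x - P x" "P x - y"] x y z P T(2) by (auto simp: subset_iff)
  also have "\<dots> = 0" using P x y z by simp
  finally show ?thesis using T(3)[OF z] by fastforce
qed

lemma orthogonal_projection_linear_on:
  assumes T: "subspace T" "T \<subseteq> U" "\<And>t. t \<in> T \<Longrightarrow> t \<noteq> 0 \<Longrightarrow> 0 < a t t"
    and P: "\<And>x. x \<in> U \<Longrightarrow> P x \<in> T \<and> (\<forall>t\<in>T. a (x - P x) t = 0)"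
  shows "linear_on_set U P"
  unfolding linear_on_set_def
proof (intro conjI ballI allI)
  have PU: "P x \<in> U" and orth: "a (x - P x) t = 0" if "x \<in> U" "t \<in> T" for x t
    using P that T(2) by blast+
  fix x y c assume x: "x \<in> U" and y: "y \<in> U"
  have "a (x + y - (P x + P y)) t = 0" if "t \<in> T" for t
    using add_left[of "x - P x" "y - P y" t] x y PU orth that T(2)
    by (auto simp: subset_iff algebra_simps)
  then show "P (x + y) = P x + P y"
    using orthogonal_projection_eq[OF T P] x y P subspace_add[OF T(1)] by simp
  have "a (c *\<^sub>R x - c *\<^sub>R P x) t = 0" if "t \<in> T" for t
    using scale_left[of "x - P x" t c] x PU orth that T(2)
    by (auto simp: subset_iff scale_right_diff_distrib)
  then show "P (c *\<^sub>R x) = c *\<^sub>R P x"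
    using orthogonal_projection_eq[OF T P] x P subspace_scale[OF T(1)] by simp
qed

end

locale inner_form = psd_form +
  assumes pos: "x \<in> U \<Longrightarrow> x \<noteq> 0 \<Longrightarrow> 0 < a x x"
begin

lemma projection_exists:
  assumes "finite S" "S \<subseteq> U" "x \<in> U"
  shows "\<exists>p\<in>span S. \<forall>s\<in>span S. a (x - p) s = 0"
  using assms
proof (induction S arbitrary: x rule: finite_induct)
  case empty
  then show ?case by simp
next
  case (insert b S)
  have S: "S \<subseteq> U" "b \<in> U" using insert.prems by auto
  have span_U: "span S \<subseteq> U" using span_minimal[OF S(1) subspace] .
  obtain p where p: "p \<in> span S" and orth: "\<forall>s\<in>span S. a (x - p) s = 0"
    using insert.IH[OF S(1) insert.prems(2)] by blast
  obtain pb where pb: "pb \<in> span S" and orth_b: "\<forall>s\<in>span S. a (b - pb) s = 0"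
    using insert.IH[OF S] by blast
  define r where "r = b - pb"
  \<comment> \<open>if \<open>b \<in> span S\<close> then \<open>r = 0\<close>, and the junk value \<open>c = 0\<close> is harmless\<close>
  define c where "c = a (x - p) r / a r r"
  have U: "x - p \<in> U" "r \<in> U" using insert.prems(2) S(2) p pb span_U unfolding r_def by auto
  have r_orth: "a r q = 0" if "q \<in> span S" for q
    using orth_b that unfolding r_def by blast
  have c: "c * a r r = a (x - p) r"
    using pos[OF U(2)] U(1) unfolding c_def by (cases "r = 0") auto
  show ?case
  proof (intro bexI ballI)
    show "p + c *\<^sub>R r \<in> span (insert b S)"
      using p unfolding span_insert_eq_line[OF pb] r_def by blast
    fix s assume "s \<in> span (insert b S)"
    then obtain q t where q: "q \<in> span S" and s: "s = q + t *\<^sub>R r"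
      unfolding span_insert_eq_line[OF pb] r_def by blast
    have "q \<in> U" using q span_U by blast
    then have "a (x - p - c *\<^sub>R r) s = t * (a (x - p) r - c * a r r)"
      using orth q r_orth[OF q] U unfolding s by (simp add: diff_left add_right scale_left scale_right)
    then show "a (x - (p + c *\<^sub>R r)) s = 0" using c by (simp add: diff_diff_eq)
  qed
qed

lemma rayleigh_bounded_on_span:
  assumes g: "linear_on_set U g" and "finite S" "S \<subseteq> U"
  shows "\<exists>M\<ge>0. \<forall>w\<in>span S. rayleigh g a w \<le> M"
  using assms(2,3)
proof (induction S rule: finite_induct)
  case empty
  then show ?case by auto
next
  case (insert b S)
  have S: "S \<subseteq> U" "b \<in> U" using insert.prems by auto
  have span_U: "span S \<subseteq> U" using span_minimal[OF S(1) subspace] .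
  obtain M where M: "0 \<le> M" "\<forall>q\<in>span S. rayleigh g a q \<le> M"
    using insert.IH[OF S(1)] by blast
  obtain pb where pb: "pb \<in> span S" and orth_b: "\<forall>s\<in>span S. a (b - pb) s = 0"
    using projection_exists[OF insert.hyps(1) S] by blast
  define r where "r = b - pb"
  have r: "r \<in> U" using S(2) pb span_U unfolding r_def by auto
  define \<rho> where "\<rho> = rayleigh g a r"
  have \<rho>: "0 \<le> \<rho>" unfolding \<rho>_def using nonneg[OF r] by (rule rayleigh_nonneg)
  show ?case
  proof (intro exI[of _ "M + \<rho>"] conjI ballI)
    show "0 \<le> M + \<rho>" using M(1) \<rho> by simp
    fix w assume "w \<in> span (insert b S)"
    then obtain q t where q: "q \<in> span S" and w: "w = q + t *\<^sub>R r"
      unfolding span_insert_eq_line[OF pb] r_def by blast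
    have qU: "q \<in> U" using q span_U by blast
    have tr: "t *\<^sub>R r \<in> U" using r by simp
    have "a q (t *\<^sub>R r) = 0"
      using orth_b q qU r symmetric[of q r] unfolding r_def by (simp add: scale_right)
    moreover have "norm (g (t *\<^sub>R r)) = sqrt \<rho> * sqrt (a (t *\<^sub>R r) (t *\<^sub>R r))"
      using norm_eq_sqrt_rayleigh[OF g r pos[OF r]] linear_on_set_scale[OF g r]
      by (simp add: \<rho>_def scale_left scale_right r real_sqrt_mult mult.assoc)
    ultimately have "rayleigh g a w \<le> rayleigh g a q + (sqrt \<rho>)\<^sup>2"
      unfolding w using rayleigh_orthogonal_add_le[OF g qU tr _ pos[OF qU]] by simp
    moreover have "rayleigh g a q \<le> M" using M(2) q by blast
    ultimately show "rayleigh g a w \<le> M + \<rho>" using \<rho> by simp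
  qed
qed

lemma rayleigh_bounded:
  assumes "linear_on_set U g" "U \<in> dim_subspaces S d"
  obtains M where "\<forall>w\<in>U. 0 \<le> rayleigh g a w \<and> rayleigh g a w \<le> M"
proof -
  obtain B where "finite B" "span B = U"
    using assms(2) unfolding mem_dim_subspaces by blast
  then show ?thesis
    using rayleigh_bounded_on_span[OF assms(1), of B] that rayleigh_nonneg nonneg span_superset
    by (metis subsetD)
qed

end

definition maxmin :: "'a::real_vector set \<Rightarrow> ('a \<Rightarrow> real) \<Rightarrow> nat \<Rightarrow> real" where
  "maxmin S f k = (SUP H\<in>dim_subspaces S k. INF v\<in>H - {0}. f v)"

lemma dim_subspaces_nonzero:
  assumes "H \<in> dim_subspaces S k" "1 \<le> k"
  obtains h where "h \<in> H" "h \<noteq> 0"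
proof -
  obtain B where B: "finite B" "independent B" "span B = H" "card B = k"
    using assms(1) unfolding mem_dim_subspaces by blast
  then obtain b where "b \<in> B" using assms(2) by fastforce
  then show ?thesis
    using that B(2,3) dependent_zero span_base by blast
qed

lemma dim_subspaces_nonempty:
  assumes "T \<in> dim_subspaces S d" "k \<le> d"
  shows "dim_subspaces T k \<noteq> {}"
proof -
  obtain B where B: "finite B" "independent B" "span B = T" "card B = d"
    using assms(1) unfolding mem_dim_subspaces by blast
  obtain B' where B': "B' \<subseteq> B" "card B' = k" "finite B'"
    using obtain_subset_with_card_n[of k B] assms(2) B(1,4) by (metis finite_subset)
  have "span B' \<in> dim_subspaces T k"
    unfolding mem_dim_subspaces using B B' independent_mono span_mono by blast
  then show ?thesis by blast
qed

lemma dim_subspaces_linear_image: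
  assumes L: "linear L" "inj_on L H" "L ` S \<subseteq> T" and H: "H \<in> dim_subspaces S k"
  shows "L ` H \<in> dim_subspaces T k"
proof -
  obtain B where B: "finite B" "independent B" "span B = H" "card B = k"
    and "H \<subseteq> S" "subspace H" using H unfolding mem_dim_subspaces by blast
  moreover have "inj_on L B" using L(2) B(3) span_superset inj_on_subset by blast
  ultimately show ?thesis
    unfolding mem_dim_subspaces using L
    by (metis card_image finite_imageI image_mono linear_independent_injective_image
        linear_span_image linear_subspace_image order_trans)
qed

lemma INF_dim_subspace_bounds:
  fixes f :: "'a::real_vector \<Rightarrow> real"
  assumes f: "\<forall>v\<in>S. 0 \<le> f v \<and> f v \<le> M" and H: "H \<in> dim_subspaces S k" "1 \<le> k"
  shows "0 \<le> (INF v\<in>H - {0}. f v)" "(INF v\<in>H - {0}. f v) \<le> M"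
proof -
  obtain h where h: "h \<in> H" "h \<noteq> 0" using dim_subspaces_nonzero[OF H] .
  have HS: "H \<subseteq> S" using H(1) unfolding mem_dim_subspaces by blast
  show "0 \<le> (INF v\<in>H - {0}. f v)" using h f HS by (intro cINF_greatest) auto
  have "(INF v\<in>H - {0}. f v) \<le> f h"
    using h f HS by (intro cINF_lower bdd_belowI[of _ 0]) auto
  then show "(INF v\<in>H - {0}. f v) \<le> M" using f h HS by force
qed

lemma maxmin_upper:
  assumes f: "\<forall>v\<in>S. 0 \<le> f v \<and> f v \<le> M" and H: "H \<in> dim_subspaces S k" "1 \<le> k"
  shows "(INF v\<in>H - {0}. f v) \<le> maxmin S f k"
  unfolding maxmin_def
  using INF_dim_subspace_bounds[OF f _ H(2)] H(1) by (intro cSUP_upper bdd_aboveI2) auto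

lemma maxmin_nonneg:
  assumes f: "\<forall>v\<in>S. 0 \<le> f v \<and> f v \<le> M" and k: "dim_subspaces S k \<noteq> {}" "1 \<le> k"
  shows "0 \<le> maxmin S f k"
proof -
  obtain H where H: "H \<in> dim_subspaces S k" using k(1) by blast
  show ?thesis
    using INF_dim_subspace_bounds(1)[OF f H k(2)] maxmin_upper[OF f H k(2)] by linarith
qed

lemma maxmin_le_linear_image:
  fixes L :: "'a::real_vector \<Rightarrow> 'b::real_vector"
  assumes L: "linear L" "L ` S \<subseteq> T"
    and f: "\<forall>v\<in>S. 0 \<le> f v" and g: "\<forall>w\<in>T. 0 \<le> g w \<and> g w \<le> M" "g 0 = 0"
    and fg: "\<forall>v\<in>S. f v \<le> g (L v) + c"
    and k: "1 \<le> k" "dim_subspaces S k \<noteq> {}" "dim_subspaces T k \<noteq> {}"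
  shows "maxmin S f k \<le> maxmin T g k + c"
  unfolding maxmin_def[of S]
proof (rule cSUP_least[OF k(2)])
  fix H assume H: "H \<in> dim_subspaces S k"
  have HS: "H \<subseteq> S" and H_sub: "subspace H" using H unfolding mem_dim_subspaces by blast+
  have INF_le: "(INF v\<in>H - {0}. f v) \<le> f v" if "v \<in> H - {0}" for v
    using that f HS by (intro cINF_lower bdd_belowI[of _ 0]) auto
  show "(INF v\<in>H - {0}. f v) \<le> maxmin T g k + c"
  proof (cases "inj_on L H")
    case True
    have LH: "L ` H \<in> dim_subspaces T k" using dim_subspaces_linear_image[OF L(1) True L(2) H] .
    have "(INF v\<in>H - {0}. f v) - c \<le> (INF w\<in>L ` H - {0}. g w)"
    proof (rule cINF_greatest)
      show "L ` H - {0} \<noteq> {}" using dim_subspaces_nonzero[OF LH k(1)] by blast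
      fix w assume "w \<in> L ` H - {0}"
      then obtain v where v: "v \<in> H - {0}" "w = L v" using linear_0[OF L(1)] by auto
      then show "(INF v\<in>H - {0}. f v) - c \<le> g w" using INF_le[OF v(1)] fg HS by force
    qed
    also have "\<dots> \<le> maxmin T g k" using maxmin_upper[OF g(1) LH k(1)] .
    finally show ?thesis by simp
  next
    case False
    then obtain v where v: "v \<in> H - {0}" "L v = 0"
      using linear_inj_on_iff_eq_0[OF L(1) H_sub] by blast
    have "(INF v\<in>H - {0}. f v) \<le> c" using INF_le[OF v(1)] fg v HS g(2) by force
    then show ?thesis using maxmin_nonneg[OF g(1) k(3,1)] by linarith
  qed
qed

lemma lam_ge_of_le_shift:
  assumes "0 \<le> \<mu>" "0 \<le> m" "\<mu> \<le> m + c"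
  shows "ereal ((1 / m) / (1 + c * (1 / m))) \<le> lam \<mu>"
proof (cases "\<mu> = 0 \<or> m = 0")
  case True
  \<comment> \<open>for \<open>m = 0\<close> the left side is the junk value \<open>ereal 0\<close>, since \<open>1 / 0 = 0\<close>\<close>
  then show ?thesis using assms(1) by (auto simp: lam_def)
next
  case False
  then have "(1 / m) / (1 + c * (1 / m)) = 1 / (m + c)" using assms(2) by (simp add: field_simps)
  moreover have "1 / (m + c) \<le> 1 / \<mu>" using False assms by (simp add: frac_le)
  ultimately show ?thesis using False by (simp add: lam_def)
qed

lemma mu_V_eq_maxmin: "mu_V \<gamma> k = maxmin UNIV (rayleigh \<gamma> (\<bullet>)) k"
  by (simp add: mu_V_def maxmin_def rayleigh_def)

lemma mu_h_eq_maxmin: "mu_h T a g k = maxmin T (rayleigh g a) k"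
  by (simp add: mu_h_def maxmin_def rayleigh_def)

lemma (in psd_form) maxmin_rayleigh_le_projection:
  fixes \<iota> :: "'v::real_inner \<Rightarrow> 'a" and \<gamma> :: "'v \<Rightarrow> 'w::real_inner"
  assumes T: "inner_form T a" "T \<subseteq> U" "T \<in> dim_subspaces UNIV d"
    and \<iota>: "linear \<iota>" "range \<iota> \<subseteq> U" "\<forall>u v. a (\<iota> u) (\<iota> v) = u \<bullet> v"
    and g: "linear_on_set U g" "\<forall>u. g (\<iota> u) = \<gamma> u"
    and P: "\<forall>x\<in>U. P x \<in> T \<and> (\<forall>t\<in>T. a (x - P x) t = 0)"
    and C: "\<forall>x\<in>U. norm (g (x - P x)) \<le> C * sqrt (a (x - P x) (x - P x))"
    and k: "1 \<le> k" "k \<le> d" "dim_subspaces (UNIV :: 'v set) k \<noteq> {}"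
  shows "maxmin UNIV (rayleigh \<gamma> (\<bullet>)) k \<le> maxmin T (rayleigh g a) k + C\<^sup>2"
    and "0 \<le> maxmin UNIV (rayleigh \<gamma> (\<bullet>)) k" "0 \<le> maxmin T (rayleigh g a) k"
proof -
  interpret T: inner_form T a by fact
  obtain M where M: "\<forall>w\<in>T. 0 \<le> rayleigh g a w \<and> rayleigh g a w \<le> M"
    using T.rayleigh_bounded[OF linear_on_set_subset[OF g(1) T(2)] T(3)] .
  define L where "L = P \<circ> \<iota>"
  have L: "linear L" "range L \<subseteq> T"
    using linear_compose_linear_on_set[OF \<iota>(1,2) orthogonal_projection_linear_on[OF T.subspace T(2)
          T.pos P[rule_format]]] \<iota>(2) P
    unfolding L_def by auto
  have key: "rayleigh \<gamma> (\<bullet>) v \<le> rayleigh g a (L v) + C\<^sup>2" for v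
  proof -
    have \<iota>v: "\<iota> v \<in> U" using \<iota>(2) by blast
    have "rayleigh \<gamma> (\<bullet>) v = rayleigh g a (\<iota> v)"
      using \<iota>(3) g(2) by (simp add: rayleigh_def)
    also have "\<dots> \<le> rayleigh g a (L v) + C\<^sup>2"
    proof -
      have p: "P (\<iota> v) \<in> T" and pU: "P (\<iota> v) \<in> U"
        using P \<iota>v T(2) by auto
      have "a (P (\<iota> v)) (\<iota> v - P (\<iota> v)) = 0"
        using P \<iota>v pU symmetric[of "P (\<iota> v)"] p by simp
      from rayleigh_orthogonal_add_le[OF g(1) pU _ this T.pos[OF p] C[rule_format, OF \<iota>v]]
      show ?thesis unfolding L_def using \<iota>v pU by simp
    qed
    finally show ?thesis .
  qed
  have f: "\<forall>v\<in>UNIV. 0 \<le> rayleigh \<gamma> (\<bullet>) v \<and> rayleigh \<gamma> (\<bullet>) v \<le> M + C\<^sup>2"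
  proof
    fix v
    have "rayleigh g a (L v) \<le> M" using M L(2) by blast
    then show "0 \<le> rayleigh \<gamma> (\<bullet>) v \<and> rayleigh \<gamma> (\<bullet>) v \<le> M + C\<^sup>2"
      using key[of v] by (simp add: rayleigh_def)
  qed
  have T_k: "dim_subspaces T k \<noteq> {}" using dim_subspaces_nonempty[OF T(3) k(2)] .
  show "maxmin UNIV (rayleigh \<gamma> (\<bullet>)) k \<le> maxmin T (rayleigh g a) k + C\<^sup>2"
    using f key k T_k by (intro maxmin_le_linear_image[OF L _ M]) auto
  show "0 \<le> maxmin UNIV (rayleigh \<gamma> (\<bullet>)) k" using maxmin_nonneg[OF f k(3,1)] .
  show "0 \<le> maxmin T (rayleigh g a) k" using maxmin_nonneg[OF M T_k k(1)] .
qed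

theorem theorem3p1:
  fixes \<gamma> :: "'v::{real_inner, complete_space} \<Rightarrow> 'w::{real_inner, complete_space}"
    and \<iota> :: "'v \<Rightarrow> 'e::real_vector"
    and Vh :: "'e set" and d :: nat
    and ahat :: "'e \<Rightarrow> 'e \<Rightarrow> real"
    and ghat :: "'e \<Rightarrow> 'w"
    and Ph :: "'e \<Rightarrow> 'e"
    and C :: real
  defines "Vsum \<equiv> {\<iota> u + w | u w. w \<in> Vh}"
  assumes sepV: "separable_space TYPE('v)"
    and sepW: "separable_space TYPE('w)"
    and gamma: "compact_operator \<gamma>"
    and iota: "linear \<iota>" "inj \<iota>"
    and Vh: "Vh \<in> dim_subspaces UNIV d"
    and ahat_bil: "bilinear_on_set Vsum ahat"
    and ahat_sym: "\<forall>u\<in>Vsum. \<forall>v\<in>Vsum. ahat u v = ahat v u"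
    and ahat_psd: "\<forall>v\<in>Vsum. 0 \<le> ahat v v"
    and ahat_pd_h: "\<forall>v\<in>Vh. v \<noteq> 0 \<longrightarrow> 0 < ahat v v"
    and ahat_V: "\<forall>u v. ahat (\<iota> u) (\<iota> v) = u \<bullet> v"
    and ghat_lin: "linear_on_set Vsum ghat"
    and ghat_V: "\<forall>u. ghat (\<iota> u) = \<gamma> u"
    and Ph: "\<forall>u\<in>Vsum. Ph u \<in> Vh \<and> (\<forall>vh\<in>Vh. ahat (u - Ph u) vh = 0)"
    and C: "0 \<le> C"
    and Ch: "\<forall>v\<in>Vsum. norm (ghat (v - Ph v)) \<le> C * sqrt (ahat (v - Ph v) (v - Ph v))"
  shows "(\<forall>k. 1 \<le> k \<and> k \<le> d \<and> dim_subspaces (UNIV::'v set) k \<noteq> {} \<longrightarrow>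
            mu_V \<gamma> k \<le> mu_h Vh ahat ghat k + C\<^sup>2)
       \<and> (let d' = card {k\<in>{1..d}. 0 < mu_h Vh ahat ghat k} in
          \<forall>k. 1 \<le> k \<and> k \<le> d' \<and> dim_subspaces (UNIV::'v set) k \<noteq> {} \<longrightarrow>
            lam (mu_V \<gamma> k) \<ge> ereal ((1 / mu_h Vh ahat ghat k) /
                                        (1 + C\<^sup>2 * (1 / mu_h Vh ahat ghat k))))"
proof -
  have Vh_sub: "subspace Vh" using Vh unfolding mem_dim_subspaces by blast
  note Vsum = subspace_linear_image_plus[OF iota(1) Vh_sub, folded Vsum_def]
  interpret Vsum: psd_form Vsum ahat
    using Vsum(1) ahat_bil ahat_sym ahat_psd by unfold_locales blast+
  have Vh_form: "inner_form Vh ahat"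
    using Vh_sub bilinear_on_set_subset[OF ahat_bil Vsum(3)] ahat_sym ahat_psd ahat_pd_h Vsum(3)
    by unfold_locales (auto simp: subset_iff)
  have mu: "mu_V \<gamma> k \<le> mu_h Vh ahat ghat k + C\<^sup>2" "0 \<le> mu_V \<gamma> k" "0 \<le> mu_h Vh ahat ghat k"
    if "1 \<le> k" "k \<le> d" "dim_subspaces (UNIV::'v set) k \<noteq> {}" for k
    using Vsum.maxmin_rayleigh_le_projection[OF Vh_form Vsum(3) Vh iota(1) Vsum(2) ahat_V ghat_lin
        ghat_V Ph Ch that]
    unfolding mu_V_eq_maxmin mu_h_eq_maxmin by auto
  have "card {k\<in>{1..d}. 0 < mu_h Vh ahat ghat k} \<le> d"
    using card_mono[of "{1..d}" "{k\<in>{1..d}. 0 < mu_h Vh ahat ghat k}"] by fastforce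
  then show ?thesis
    using mu lam_ge_of_le_shift by (auto simp: Let_def)
qed

end
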